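(* For regular spaces $X$, the following properties are pairwise equivalent: DCCC; selectively $3$-star-ccc; selectively $\omega$-star-ccc; weakly star-Lindelöf; weakly $\omega$-star-Lindelöf; weakly strongly $2$-star-Lindelöf; weakly strongly $\omega$-star-Lindelöf; $2$-star-Lindelöf; $\omega$-star-Lindelöf; strongly $3$-star-Lindelöf; strongly $\omega$-star-Lindelöf (and hence so is every property that is implied by one of these and implies another of these).
   Context: For $B\subseteq X$ and a family $\mathcal{U}$ of subsets of $X$: $\operatorname{st}^1(B,\mathcal{U})=\bigcup\{U\in\mathcal{U}:U\cap B\neq\emptyset\}$, $\operatorname{st}^{n+1}(B,\mathcal{U})=\bigcup\{U\in\mathcal{U}:U\cap\operatorname{st}^n(B,\mathcal{U})\neq\emptyset\}$. DCCC: every discrete family of open sets is countable. For $k\in\mathbb{N}^+$: $X$ is $k$-star-Lindelöf (resp. strongly $k$-star-Lindelöf) if every open cover $\mathcal{U}$ admits a countable $\mathcal{V}\subseteq\mathcal{U}$ (resp. countable $B\subseteq X$) with $\operatorname{st}^k(\bigcup\mathcal{V},\mathcal{U})=X$ (resp. $\operatorname{st}^k(B,\mathcal{U})=X$); weakly $k$-star-Lindelöf (resp. weakly strongly $k$-star-Lindelöf) is the same with the conclusion replaced by density: $\overline{\operatorname{st}^k(\bigcup\mathcal{V},\mathcal{U})}=X$ (resp. $\overline{\operatorname{st}^k(B,\mathcal{U})}=X$). The $\omega$-versions ($\omega$-star-Lindelöf, strongly $\omega$-star-Lindelöf, weakly $\omega$-star-Lindelöf, weakly strongly $\omega$-star-Lindelöf)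 are defined the same way except that for each open cover one only requires some $k\in\mathbb{N}^+$ (depending on the cover) together with the countable $\mathcal{V}$ or $B$. "Weakly star-Lindelöf" means weakly $1$-star-Lindelöf. $X$ is selectively $k$-star-ccc if for every open cover $\mathcal{U}$ and every sequence $(\mathcal{A}_n:n\in\omega)$ of maximal pairwise disjoint families of open sets there is $(A_n\in\mathcal{A}_n:n\in\omega)$ with $\operatorname{st}^k(\bigcup_n A_n,\mathcal{U})=X$; selectively $\omega$-star-ccc is the same but with some $k\in\mathbb{N}^+$ (depending on $\mathcal{U}$ and the sequence) allowed. *)

theory Defs
  imports "HOL-Analysis.Analysis"
begin

fun stk :: "nat \<Rightarrow> 'a set \<Rightarrow> 'a set set \<Rightarrow> 'a set" where
  "stk 0 B \<U> = B"
| "stk (Suc n) B \<U> = \<Union>{U \<in> \<U>. U \<inter> stk n B \<U> \<noteq> {}}"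

definition open_cover :: "'a topology \<Rightarrow> 'a set set \<Rightarrow> bool" where
  "open_cover X \<U> \<longleftrightarrow> (\<forall>U\<in>\<U>. openin X U) \<and> \<Union>\<U> = topspace X"

definition discrete_family :: "'a topology \<Rightarrow> 'a set set \<Rightarrow> bool" where
  "discrete_family X \<A> \<longleftrightarrow>
     (\<forall>x\<in>topspace X. \<exists>W. openin X W \<and> x \<in> W \<and>
        (\<forall>A1\<in>\<A>. \<forall>A2\<in>\<A>. A1 \<inter> W \<noteq> {} \<longrightarrow> A2 \<inter> W \<noteq> {} \<longrightarrow> A1 = A2))"

definition DCCC :: "'a topology \<Rightarrow> bool" where
  "DCCC X \<longleftrightarrow> (\<forall>\<A>. (\<forall>A\<in>\<A>. openin X A) \<and> discrete_family X \<A> \<longrightarrow> countable \<A>)"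

definition k_star_lindelof :: "nat \<Rightarrow> 'a topology \<Rightarrow> bool" where
  "k_star_lindelof k X \<longleftrightarrow> (\<forall>\<U>. open_cover X \<U> \<longrightarrow>
     (\<exists>\<V>. \<V> \<subseteq> \<U> \<and> countable \<V> \<and> stk k (\<Union>\<V>) \<U> = topspace X))"

definition strongly_k_star_lindelof :: "nat \<Rightarrow> 'a topology \<Rightarrow> bool" where
  "strongly_k_star_lindelof k X \<longleftrightarrow> (\<forall>\<U>. open_cover X \<U> \<longrightarrow>
     (\<exists>B. B \<subseteq> topspace X \<and> countable B \<and> stk k B \<U> = topspace X))"

definition weakly_k_star_lindelof :: "nat \<Rightarrow> 'a topology \<Rightarrow> bool" where
  "weakly_k_star_lindelof k X \<longleftrightarrow> (\<forall>\<U>. open_cover X \<U> \<longrightarrow>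
     (\<exists>\<V>. \<V> \<subseteq> \<U> \<and> countable \<V> \<and> X closure_of (stk k (\<Union>\<V>) \<U>) = topspace X))"

definition weakly_strongly_k_star_lindelof :: "nat \<Rightarrow> 'a topology \<Rightarrow> bool" where
  "weakly_strongly_k_star_lindelof k X \<longleftrightarrow> (\<forall>\<U>. open_cover X \<U> \<longrightarrow>
     (\<exists>B. B \<subseteq> topspace X \<and> countable B \<and> X closure_of (stk k B \<U>) = topspace X))"

definition omega_star_lindelof :: "'a topology \<Rightarrow> bool" where
  "omega_star_lindelof X \<longleftrightarrow> (\<forall>\<U>. open_cover X \<U> \<longrightarrow>
     (\<exists>k\<ge>1. \<exists>\<V>. \<V> \<subseteq> \<U> \<and> countable \<V> \<and> stk k (\<Union>\<V>) \<U> = topspace X))"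

definition strongly_omega_star_lindelof :: "'a topology \<Rightarrow> bool" where
  "strongly_omega_star_lindelof X \<longleftrightarrow> (\<forall>\<U>. open_cover X \<U> \<longrightarrow>
     (\<exists>k\<ge>1. \<exists>B. B \<subseteq> topspace X \<and> countable B \<and> stk k B \<U> = topspace X))"

definition weakly_omega_star_lindelof :: "'a topology \<Rightarrow> bool" where
  "weakly_omega_star_lindelof X \<longleftrightarrow> (\<forall>\<U>. open_cover X \<U> \<longrightarrow>
     (\<exists>k\<ge>1. \<exists>\<V>. \<V> \<subseteq> \<U> \<and> countable \<V> \<and> X closure_of (stk k (\<Union>\<V>) \<U>) = topspace X))"

definition weakly_strongly_omega_star_lindelof :: "'a topology \<Rightarrow> bool" where
  "weakly_strongly_omega_star_lindelof X \<longleftrightarrow> (\<forall>\<U>. open_cover X \<U> \<longrightarrow>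
     (\<exists>k\<ge>1. \<exists>B. B \<subseteq> topspace X \<and> countable B \<and> X closure_of (stk k B \<U>) = topspace X))"

definition disjoint_open_family :: "'a topology \<Rightarrow> 'a set set \<Rightarrow> bool" where
  "disjoint_open_family X \<A> \<longleftrightarrow> (\<forall>A\<in>\<A>. openin X A) \<and> pairwise disjnt \<A>"

definition maximal_disjoint_open_family :: "'a topology \<Rightarrow> 'a set set \<Rightarrow> bool" where
  "maximal_disjoint_open_family X \<A> \<longleftrightarrow> disjoint_open_family X \<A> \<and>
     (\<forall>\<B>. disjoint_open_family X \<B> \<and> \<A> \<subseteq> \<B> \<longrightarrow> \<B> = \<A>)"

definition selectively_k_star_ccc :: "nat \<Rightarrow> 'a topology \<Rightarrow> bool" where
  "selectively_k_star_ccc k X \<longleftrightarrow> (\<forall>\<U> \<A>. open_cover X \<U> \<and>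
     (\<forall>n::nat. maximal_disjoint_open_family X (\<A> n)) \<longrightarrow>
     (\<exists>A. (\<forall>n. A n \<in> \<A> n) \<and> stk k (\<Union>n. A n) \<U> = topspace X))"

definition selectively_omega_star_ccc :: "'a topology \<Rightarrow> bool" where
  "selectively_omega_star_ccc X \<longleftrightarrow> (\<forall>\<U> \<A>. open_cover X \<U> \<and>
     (\<forall>n::nat. maximal_disjoint_open_family X (\<A> n)) \<longrightarrow>
     (\<exists>k\<ge>1. \<exists>A. (\<forall>n. A n \<in> \<A> n) \<and> stk k (\<Union>n. A n) \<U> = topspace X))"

end

theory Submission
  imports Defs
begin

(* DCCC gives, for every open cover \<U>, a countable family of nonempty open sets, each inside a
   member of \<U>, whose \<U>-star is dense: a maximal family of such sets that are pairwise
   star-separated (no member of \<U> meets two of them) is discrete, hence countable.  This yields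
   weak star-Lindeloefness and selective 3-star-ccc.  A dense k-star forces the (k+1)-star to be the
   whole space, and a countable subfamily of \<U> can be traded for a countable set of points at the
   price of one more star; this gives the remaining implications from DCCC.

   Conversely, let X be regular and let \<A> be an uncountable discrete family of nonempty open sets,
   split so that every depth d \<in> \<nat> is taken by uncountably many members.  A member A of depth d
   is cut along open sets A = W 0, W 1, ... with cl W (j+1) \<subseteq> W j into the shells
   W j - cl W (j+2) (j < d) and W d.  Together with the complement of the union of all cl W 1
   (closed, by discreteness) they form an open cover whose members meet W 1 of at most one A, and
   in which the k-fold star of a set missing W 1 still misses W (k+1) for k \<le> d.  Given a
   countable subfamily and k, some member of depth k has its W 1 disjoint from the subfamily, so
   the nonempty open set W (k+1) shows that the k-star is not dense. *)

unbundle cardinal_syntax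

lemma stk_mono: "B \<subseteq> B' \<Longrightarrow> stk n B \<U> \<subseteq> stk n B' \<U>"
  by (induction n) auto

lemma stk_add: "stk n (stk m B \<U>) \<U> = stk (n + m) B \<U>"
  by (induction n) auto

lemma open_cover_openin: "open_cover X \<U> \<Longrightarrow> U \<in> \<U> \<Longrightarrow> openin X U"
  unfolding open_cover_def by blast

lemma open_cover_covers: "open_cover X \<U> \<Longrightarrow> x \<in> topspace X \<Longrightarrow> \<exists>U\<in>\<U>. x \<in> U"
  unfolding open_cover_def by blast

lemma open_cover_Union_subset: "open_cover X \<U> \<Longrightarrow> \<V> \<subseteq> \<U> \<Longrightarrow> \<Union>\<V> \<subseteq> topspace X"
  unfolding open_cover_def by blast

lemma stk_Suc_subset_topspace: "open_cover X \<U> \<Longrightarrow> stk (Suc n) B \<U> \<subseteq> topspace X"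
  unfolding open_cover_def by auto

lemma stk_subset_topspace: "open_cover X \<U> \<Longrightarrow> B \<subseteq> topspace X \<Longrightarrow> stk n B \<U> \<subseteq> topspace X"
  unfolding open_cover_def by (cases n) auto

lemma stk_Suc_eq_topspace_if_dense:
  assumes cover: "open_cover X \<U>" and dense: "X closure_of stk n B \<U> = topspace X"
  shows "stk (Suc n) B \<U> = topspace X"
proof
  show "topspace X \<subseteq> stk (Suc n) B \<U>"
  proof
    fix x assume x: "x \<in> topspace X"
    then obtain U where U: "U \<in> \<U>" "x \<in> U"
      using open_cover_covers[OF cover] by blast
    have "x \<in> X closure_of stk n B \<U>"
      using x dense by simp
    then have "U \<inter> stk n B \<U> \<noteq> {}"
      using U open_cover_openin[OF cover U(1)] unfolding in_closure_of by blast
    then show "x \<in> stk (Suc n) B \<U>"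
      using U by auto
  qed
qed (rule stk_Suc_subset_topspace[OF cover])

lemma countable_subfamily_covering_refinement:
  assumes "countable \<W>" and "\<forall>W\<in>\<W>. W \<noteq> {} \<longrightarrow> (\<exists>U\<in>\<U>. W \<subseteq> U)"
  shows "\<exists>\<V>\<subseteq>\<U>. countable \<V> \<and> \<Union>\<W> \<subseteq> \<Union>\<V>"
proof -
  have "\<forall>W\<in>\<W> - {{}}. \<exists>U. U \<in> \<U> \<and> W \<subseteq> U"
    using assms(2) by blast
  then obtain f where f: "\<forall>W\<in>\<W> - {{}}. f W \<in> \<U> \<and> W \<subseteq> f W"
    by (rule bchoice[THEN exE])
  have "f ` (\<W> - {{}}) \<subseteq> \<U>" and "\<Union>\<W> \<subseteq> \<Union>(f ` (\<W> - {{}}))"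
    using f by blast+
  moreover have "countable (f ` (\<W> - {{}}))"
    using assms(1) by simp
  ultimately show ?thesis
    by blast
qed

lemma countable_subfamily_covering_points:
  assumes "open_cover X \<U>" and "B \<subseteq> topspace X" and "countable B"
  shows "\<exists>\<V>\<subseteq>\<U>. countable \<V> \<and> B \<subseteq> \<Union>\<V>"
proof -
  have "\<forall>W\<in>(\<lambda>b. {b}) ` B. W \<noteq> {} \<longrightarrow> (\<exists>U\<in>\<U>. W \<subseteq> U)"
    using open_cover_covers[OF assms(1)] assms(2) by blast
  moreover have "\<Union>((\<lambda>b. {b}) ` B) = B"
    by blast
  ultimately show ?thesis
    using countable_subfamily_covering_refinement[of "(\<lambda>b. {b}) ` B" \<U>] assms(3) by simp
qed

lemma stk_Union_subset_stk_Suc_points: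
  assumes "countable \<V>" and "\<V> \<subseteq> \<U>"
  shows "\<exists>B\<subseteq>\<Union>\<V>. countable B \<and> (\<forall>k. stk k (\<Union>\<V>) \<U> \<subseteq> stk (Suc k) B \<U>)"
proof -
  define B where "B = (\<lambda>V. SOME x. x \<in> V) ` (\<V> - {{}})"
  have "\<Union>\<V> \<subseteq> stk 1 B \<U>"
  proof
    fix x assume "x \<in> \<Union>\<V>"
    then obtain V where V: "V \<in> \<V>" "x \<in> V"
      by blast
    then have "(SOME x. x \<in> V) \<in> V \<inter> B"
      unfolding B_def by (auto intro: someI)
    then show "x \<in> stk 1 B \<U>"
      using V assms(2) by auto
  qed
  then have "stk k (\<Union>\<V>) \<U> \<subseteq> stk (Suc k) B \<U>" for k
    using stk_mono[of "\<Union>\<V>" "stk 1 B \<U>" k \<U>] stk_add[of k 1 B \<U>] by simp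
  moreover have "B \<subseteq> \<Union>\<V>"
    unfolding B_def by (auto intro: someI)
  moreover have "countable B"
    unfolding B_def using assms(1) by simp
  ultimately show ?thesis
    by blast
qed

lemma k_star_lindelof_imp_strongly_Suc:
  assumes "k_star_lindelof k X"
  shows "strongly_k_star_lindelof (Suc k) X"
  unfolding strongly_k_star_lindelof_def
proof (intro allI impI)
  fix \<U> assume cover: "open_cover X \<U>"
  then obtain \<V> where \<V>: "\<V> \<subseteq> \<U>" "countable \<V>" and star: "stk k (\<Union>\<V>) \<U> = topspace X"
    using assms unfolding k_star_lindelof_def by blast
  obtain B where B: "B \<subseteq> \<Union>\<V>" "countable B" "stk k (\<Union>\<V>) \<U> \<subseteq> stk (Suc k) B \<U>"
    using stk_Union_subset_stk_Suc_points[OF \<V>(2,1)] by blast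
  have "stk (Suc k) B \<U> = topspace X"
    using stk_Suc_subset_topspace[OF cover] B(3) unfolding star by (rule subset_antisym)
  moreover have "B \<subseteq> topspace X"
    using B(1) open_cover_Union_subset[OF cover \<V>(1)] by blast
  ultimately show "\<exists>B\<subseteq>topspace X. countable B \<and> stk (Suc k) B \<U> = topspace X"
    using B(2) by blast
qed

lemma weakly_k_star_lindelof_imp_weakly_strongly_Suc:
  assumes "weakly_k_star_lindelof k X"
  shows "weakly_strongly_k_star_lindelof (Suc k) X"
  unfolding weakly_strongly_k_star_lindelof_def
proof (intro allI impI)
  fix \<U> assume cover: "open_cover X \<U>"
  then obtain \<V> where \<V>: "\<V> \<subseteq> \<U>" "countable \<V>"
    and dense: "X closure_of stk k (\<Union>\<V>) \<U> = topspace X"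
    using assms unfolding weakly_k_star_lindelof_def by blast
  obtain B where B: "B \<subseteq> \<Union>\<V>" "countable B" "stk k (\<Union>\<V>) \<U> \<subseteq> stk (Suc k) B \<U>"
    using stk_Union_subset_stk_Suc_points[OF \<V>(2,1)] by blast
  have "X closure_of stk (Suc k) B \<U> = topspace X"
    using closure_of_subset_topspace closure_of_mono[OF B(3), of X] unfolding dense
    by (rule subset_antisym)
  moreover have "B \<subseteq> topspace X"
    using B(1) open_cover_Union_subset[OF cover \<V>(1)] by blast
  ultimately show "\<exists>B\<subseteq>topspace X. countable B \<and> X closure_of stk (Suc k) B \<U> = topspace X"
    using B(2) by blast
qed

lemma weakly_k_star_lindelof_imp_Suc:
  assumes "weakly_k_star_lindelof k X"
  shows "k_star_lindelof (Suc k) X"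
  unfolding k_star_lindelof_def
proof (intro allI impI)
  fix \<U> assume cover: "open_cover X \<U>"
  then obtain \<V> where "\<V> \<subseteq> \<U>" "countable \<V>" "X closure_of stk k (\<Union>\<V>) \<U> = topspace X"
    using assms unfolding weakly_k_star_lindelof_def by blast
  then show "\<exists>\<V>\<subseteq>\<U>. countable \<V> \<and> stk (Suc k) (\<Union>\<V>) \<U> = topspace X"
    using stk_Suc_eq_topspace_if_dense[OF cover] by blast
qed

lemma strongly_omega_star_lindelof_imp_omega:
  assumes "strongly_omega_star_lindelof X"
  shows "omega_star_lindelof X"
  unfolding omega_star_lindelof_def
proof (intro allI impI)
  fix \<U> assume cover: "open_cover X \<U>"
  then obtain k B where B: "k \<ge> 1" "B \<subseteq> topspace X" "countable B" "stk k B \<U> = topspace X"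
    using assms unfolding strongly_omega_star_lindelof_def by blast
  obtain \<V> where \<V>: "\<V> \<subseteq> \<U>" "countable \<V>" "B \<subseteq> \<Union>\<V>"
    using countable_subfamily_covering_points[OF cover B(2,3)] by blast
  have "stk k (\<Union>\<V>) \<U> = topspace X"
    using stk_subset_topspace[OF cover open_cover_Union_subset[OF cover \<V>(1)]]
      stk_mono[OF \<V>(3), of k \<U>] unfolding B(4) by (rule subset_antisym)
  then show "\<exists>k\<ge>1. \<exists>\<V>\<subseteq>\<U>. countable \<V> \<and> stk k (\<Union>\<V>) \<U> = topspace X"
    using B(1) \<V>(1,2) by blast
qed

lemma weakly_strongly_omega_star_lindelof_imp_weakly_omega:
  assumes "weakly_strongly_omega_star_lindelof X"
  shows "weakly_omega_star_lindelof X"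
  unfolding weakly_omega_star_lindelof_def
proof (intro allI impI)
  fix \<U> assume cover: "open_cover X \<U>"
  then obtain k B where B: "k \<ge> 1" "B \<subseteq> topspace X" "countable B"
    "X closure_of stk k B \<U> = topspace X"
    using assms unfolding weakly_strongly_omega_star_lindelof_def by blast
  obtain \<V> where \<V>: "\<V> \<subseteq> \<U>" "countable \<V>" "B \<subseteq> \<Union>\<V>"
    using countable_subfamily_covering_points[OF cover B(2,3)] by blast
  have "X closure_of stk k (\<Union>\<V>) \<U> = topspace X"
    using closure_of_subset_topspace closure_of_mono[OF stk_mono[OF \<V>(3), of k \<U>], of X]
    unfolding B(4) by (rule subset_antisym)
  then show "\<exists>k\<ge>1. \<exists>\<V>\<subseteq>\<U>. countable \<V> \<and> X closure_of stk k (\<Union>\<V>) \<U> = topspace X"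
    using B(1) \<V>(1,2) by blast
qed

lemma omega_star_lindelof_imp_weakly_omega:
  "omega_star_lindelof X \<Longrightarrow> weakly_omega_star_lindelof X"
  unfolding omega_star_lindelof_def weakly_omega_star_lindelof_def
  by (metis closure_of_topspace)

lemma k_star_lindelof_imp_omega:
  "k \<ge> 1 \<Longrightarrow> k_star_lindelof k X \<Longrightarrow> omega_star_lindelof X"
  unfolding omega_star_lindelof_def k_star_lindelof_def by blast

lemma strongly_k_star_lindelof_imp_omega:
  "k \<ge> 1 \<Longrightarrow> strongly_k_star_lindelof k X \<Longrightarrow> strongly_omega_star_lindelof X"
  unfolding strongly_omega_star_lindelof_def strongly_k_star_lindelof_def by blast

lemma weakly_k_star_lindelof_imp_omega:
  "k \<ge> 1 \<Longrightarrow> weakly_k_star_lindelof k X \<Longrightarrow> weakly_omega_star_lindelof X"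
  unfolding weakly_omega_star_lindelof_def weakly_k_star_lindelof_def by blast

lemma weakly_strongly_k_star_lindelof_imp_omega:
  "k \<ge> 1 \<Longrightarrow> weakly_strongly_k_star_lindelof k X \<Longrightarrow> weakly_strongly_omega_star_lindelof X"
  unfolding weakly_strongly_omega_star_lindelof_def weakly_strongly_k_star_lindelof_def by blast

lemma selectively_k_star_ccc_imp_omega:
  "k \<ge> 1 \<Longrightarrow> selectively_k_star_ccc k X \<Longrightarrow> selectively_omega_star_ccc X"
  unfolding selectively_omega_star_ccc_def selectively_k_star_ccc_def by blast

lemma exists_maximal_pairwise_subset:
  "\<exists>M\<subseteq>S. pairwise R M \<and> (\<forall>x\<in>S. pairwise R (insert x M) \<longrightarrow> x \<in> M)"
proof -
  let ?\<F> = "{M. M \<subseteq> S \<and> pairwise R M}"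
  have "\<forall>\<C>\<in>chains ?\<F>. \<Union>\<C> \<in> ?\<F>"
  proof
    fix \<C> assume "\<C> \<in> chains ?\<F>"
    then have \<C>: "\<C> \<subseteq> ?\<F>" "chain\<^sub>\<subseteq> \<C>"
      unfolding chains_def by auto
    have "pairwise R (\<Union>\<C>)"
      using \<C> by (intro pairwise_chain_Union) auto
    moreover have "\<Union>\<C> \<subseteq> S"
      using \<C>(1) by auto
    ultimately show "\<Union>\<C> \<in> ?\<F>"
      by simp
  qed
  then obtain M where M: "M \<in> ?\<F>" and maximal: "\<forall>N\<in>?\<F>. M \<subseteq> N \<longrightarrow> N = M"
    by (rule Zorn_Lemma[THEN bexE])
  have "x \<in> M" if "x \<in> S" "pairwise R (insert x M)" for x
    using maximal[rule_format, of "insert x M"] M that by blast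
  then show ?thesis
    using M by blast
qed

lemma maximal_disjoint_open_family_absorbs:
  assumes maximal: "maximal_disjoint_open_family X \<A>" and "openin X G" and "\<forall>A\<in>\<A>. disjnt G A"
  shows "G \<in> \<A>"
proof -
  have "disjoint_open_family X (insert G \<A>)"
    using assms unfolding maximal_disjoint_open_family_def disjoint_open_family_def
    by (auto simp: pairwise_insert disjnt_sym)
  then show ?thesis
    using maximal unfolding maximal_disjoint_open_family_def by blast
qed

lemma maximal_disjoint_open_familyI:
  assumes "disjoint_open_family X \<A>"
    and absorbs: "\<And>G. openin X G \<Longrightarrow> \<forall>A\<in>\<A>. disjnt G A \<Longrightarrow> G \<in> \<A>"
  shows "maximal_disjoint_open_family X \<A>"
  unfolding maximal_disjoint_open_family_def
proof (intro conjI assms allI impI, elim conjE)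
  fix \<B> assume \<B>: "disjoint_open_family X \<B>" "\<A> \<subseteq> \<B>"
  have "G \<in> \<A>" if "G \<in> \<B>" for G
  proof (rule ccontr)
    assume "G \<notin> \<A>"
    have "openin X G" "\<forall>A\<in>\<A>. disjnt G A"
      using \<B> \<open>G \<in> \<B>\<close> \<open>G \<notin> \<A>\<close> unfolding disjoint_open_family_def by (auto intro: pairwiseD)
    then show False
      using absorbs \<open>G \<notin> \<A>\<close> by blast
  qed
  then show "\<B> = \<A>"
    using \<B>(2) by blast
qed

lemma exists_maximal_disjoint_open_refinement:
  assumes cover: "open_cover X \<U>"
  shows "\<exists>\<A>. maximal_disjoint_open_family X \<A> \<and> (\<forall>A\<in>\<A>. A \<noteq> {} \<longrightarrow> (\<exists>U\<in>\<U>. A \<subseteq> U))"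
proof -
  define S where "S = {G. openin X G \<and> (G \<noteq> {} \<longrightarrow> (\<exists>U\<in>\<U>. G \<subseteq> U))}"
  obtain \<A> where \<A>: "\<A> \<subseteq> S" "pairwise disjnt \<A>"
    and maximal: "\<forall>G\<in>S. pairwise disjnt (insert G \<A>) \<longrightarrow> G \<in> \<A>"
    using exists_maximal_pairwise_subset[of S disjnt] by (elim exE conjE)
  have absorbs: "G \<in> \<A>" if G: "G \<in> S" "\<forall>A\<in>\<A>. disjnt G A" for G
    using maximal \<A>(2) G by (auto simp: pairwise_insert disjnt_sym)
  have "G \<in> \<A>" if G: "openin X G" "\<forall>A\<in>\<A>. disjnt G A" for G
  proof (cases "G = {}")
    case False
    then obtain x U where x: "x \<in> G" "U \<in> \<U>" "x \<in> U"
      using open_cover_covers[OF cover] openin_subset[OF G(1)] by blast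
    have "G \<inter> U \<in> S"
      using G(1) open_cover_openin[OF cover x(2)] x(2) unfolding S_def by auto
    then have "G \<inter> U \<in> \<A>"
      using G(2) by (intro absorbs) (auto simp: disjnt_def)
    then show ?thesis
      using G(2) x by (auto simp: disjnt_def)
  qed (use G absorbs S_def in auto)
  then have "maximal_disjoint_open_family X \<A>"
    using \<A> by (intro maximal_disjoint_open_familyI) (auto simp: disjoint_open_family_def S_def)
  then show ?thesis
    using \<A>(1) unfolding S_def by blast
qed

lemma selectively_omega_star_ccc_imp_omega_star_lindelof:
  assumes "selectively_omega_star_ccc X"
  shows "omega_star_lindelof X"
  unfolding omega_star_lindelof_def
proof (intro allI impI)
  fix \<U> assume cover: "open_cover X \<U>"
  obtain \<A> where \<A>: "maximal_disjoint_open_family X \<A>"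
    and refines: "\<forall>A\<in>\<A>. A \<noteq> {} \<longrightarrow> (\<exists>U\<in>\<U>. A \<subseteq> U)"
    using exists_maximal_disjoint_open_refinement[OF cover] by (elim exE conjE)
  have "\<exists>k\<ge>1. \<exists>A. (\<forall>n::nat. A n \<in> \<A>) \<and> stk k (\<Union>n. A n) \<U> = topspace X"
    using assms[unfolded selectively_omega_star_ccc_def, THEN spec[of _ \<U>], THEN spec[of _ "\<lambda>_. \<A>"]]
      cover \<A> by simp
  then obtain k and A :: "nat \<Rightarrow> 'a set"
    where k: "k \<ge> 1" and A: "\<forall>n. A n \<in> \<A>" "stk k (\<Union>n. A n) \<U> = topspace X"
    by (elim exE conjE)
  have "\<forall>W\<in>range A. W \<noteq> {} \<longrightarrow> (\<exists>U\<in>\<U>. W \<subseteq> U)"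
    using A(1) refines by blast
  then obtain \<V> where \<V>: "\<V> \<subseteq> \<U>" "countable \<V>" "\<Union>(range A) \<subseteq> \<Union>\<V>"
    using countable_subfamily_covering_refinement[of "range A" \<U>] by auto
  have "stk k (\<Union>\<V>) \<U> = topspace X"
    using stk_subset_topspace[OF cover open_cover_Union_subset[OF cover \<V>(1)]]
      stk_mono[OF \<V>(3), of k \<U>] unfolding A(2) by (rule subset_antisym)
  then show "\<exists>k\<ge>1. \<exists>\<V>\<subseteq>\<U>. countable \<V> \<and> stk k (\<Union>\<V>) \<U> = topspace X"
    using k \<V>(1,2) by blast
qed

definition star_separated :: "'a set set \<Rightarrow> 'a set \<Rightarrow> 'a set \<Rightarrow> bool" where
  "star_separated \<U> G H \<longleftrightarrow> (\<forall>U\<in>\<U>. U \<inter> G = {} \<or> U \<inter> H = {})"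

lemma stk_dense_if_not_star_separated:
  assumes cover: "open_cover X \<U>"
    and linked: "\<And>G. openin X G \<Longrightarrow> G \<noteq> {} \<Longrightarrow> \<exists>U\<in>\<U>. G \<subseteq> U \<Longrightarrow> \<exists>W\<in>\<W>. \<not> star_separated \<U> G W"
  shows "X closure_of stk 1 (\<Union>\<W>) \<U> = topspace X"
proof (rule subset_antisym[OF closure_of_subset_topspace subsetI])
  fix x assume x: "x \<in> topspace X"
  show "x \<in> X closure_of stk 1 (\<Union>\<W>) \<U>"
    unfolding in_closure_of
  proof (intro conjI x allI impI)
    fix T assume T: "x \<in> T \<and> openin X T"
    obtain U where U: "U \<in> \<U>" "x \<in> U"
      using open_cover_covers[OF cover x] by blast
    have "openin X (T \<inter> U)" "T \<inter> U \<noteq> {}" "\<exists>U'\<in>\<U>. T \<inter> U \<subseteq> U'"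
      using T U open_cover_openin[OF cover U(1)] by auto
    then obtain W U' where "W \<in> \<W>" "U' \<in> \<U>" "U' \<inter> (T \<inter> U) \<noteq> {}" "U' \<inter> W \<noteq> {}"
      using linked unfolding star_separated_def by blast
    then show "\<exists>y. y \<in> stk 1 (\<Union>\<W>) \<U> \<and> y \<in> T"
      by auto
  qed
qed

lemma pairwise_star_separated_imp_discrete_family:
  assumes cover: "open_cover X \<U>" and separated: "pairwise (star_separated \<U>) \<W>"
  shows "discrete_family X \<W>"
  unfolding discrete_family_def
proof
  fix x assume "x \<in> topspace X"
  then obtain U where U: "U \<in> \<U>" "x \<in> U"
    using open_cover_covers[OF cover] by blast
  have "A1 = A2" if "A1 \<in> \<W>" "A2 \<in> \<W>" "A1 \<inter> U \<noteq> {}" "A2 \<inter> U \<noteq> {}" for A1 A2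
    using pairwiseD[OF separated that(1,2)] U(1) that(3,4) unfolding star_separated_def by blast
  then show "\<exists>W. openin X W \<and> x \<in> W \<and>
      (\<forall>A1\<in>\<W>. \<forall>A2\<in>\<W>. A1 \<inter> W \<noteq> {} \<longrightarrow> A2 \<inter> W \<noteq> {} \<longrightarrow> A1 = A2)"
    using open_cover_openin[OF cover U(1)] U(2) by blast
qed

lemma DCCC_dense_star_refinement:
  assumes "DCCC X" and cover: "open_cover X \<U>"
  obtains \<W> where "countable \<W>" and "\<forall>W\<in>\<W>. openin X W \<and> W \<noteq> {} \<and> (\<exists>U\<in>\<U>. W \<subseteq> U)"
    and "X closure_of stk 1 (\<Union>\<W>) \<U> = topspace X"
proof -
  define S where "S = {G. openin X G \<and> G \<noteq> {} \<and> (\<exists>U\<in>\<U>. G \<subseteq> U)}"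
  obtain \<W> where \<W>: "\<W> \<subseteq> S" "pairwise (star_separated \<U>) \<W>"
    and maximal: "\<forall>G\<in>S. pairwise (star_separated \<U>) (insert G \<W>) \<longrightarrow> G \<in> \<W>"
    using exists_maximal_pairwise_subset[of S "star_separated \<U>"] by (elim exE conjE)
  have "countable \<W>"
    using assms(1) \<W>(1) pairwise_star_separated_imp_discrete_family[OF cover \<W>(2)]
    unfolding DCCC_def S_def by blast
  moreover have "\<exists>W\<in>\<W>. \<not> star_separated \<U> G W" if "G \<in> S" for G
  proof (cases "G \<in> \<W>")
    case True
    obtain U where "U \<in> \<U>" "G \<subseteq> U" "G \<noteq> {}"
      using \<open>G \<in> S\<close> unfolding S_def by blast
    then have "\<not> star_separated \<U> G G"
      unfolding star_separated_def by blast
    then show ?thesis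
      using True by blast
  next
    case False
    then have "\<not> pairwise (star_separated \<U>) (insert G \<W>)"
      using maximal \<open>G \<in> S\<close> by blast
    then obtain W where "W \<in> \<W>" "\<not> star_separated \<U> G W \<or> \<not> star_separated \<U> W G"
      using \<W>(2) by (auto simp: pairwise_insert)
    then show ?thesis
      unfolding star_separated_def by blast
  qed
  then have "X closure_of stk 1 (\<Union>\<W>) \<U> = topspace X"
    by (intro stk_dense_if_not_star_separated[OF cover]) (auto simp: S_def)
  ultimately show ?thesis
    using that \<W>(1) unfolding S_def by blast
qed

lemma DCCC_imp_weakly_star_lindelof:
  assumes "DCCC X"
  shows "weakly_k_star_lindelof 1 X"
  unfolding weakly_k_star_lindelof_def
proof (intro allI impI)
  fix \<U> assume cover: "open_cover X \<U>"
  obtain \<W> where \<W>: "countable \<W>" "\<forall>W\<in>\<W>. openin X W \<and> W \<noteq> {} \<and> (\<exists>U\<in>\<U>. W \<subseteq> U)"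
    and dense: "X closure_of stk 1 (\<Union>\<W>) \<U> = topspace X"
    using DCCC_dense_star_refinement[OF assms cover] by blast
  have "\<forall>W\<in>\<W>. W \<noteq> {} \<longrightarrow> (\<exists>U\<in>\<U>. W \<subseteq> U)"
    using \<W>(2) by blast
  then obtain \<V> where \<V>: "\<V> \<subseteq> \<U>" "countable \<V>" "\<Union>\<W> \<subseteq> \<Union>\<V>"
    using countable_subfamily_covering_refinement[of \<W> \<U>] \<W>(1) by auto
  have "X closure_of stk 1 (\<Union>\<V>) \<U> = topspace X"
    using closure_of_subset_topspace closure_of_mono[OF stk_mono[OF \<V>(3), of 1 \<U>], of X]
    unfolding dense by (rule subset_antisym)
  then show "\<exists>\<V>\<subseteq>\<U>. countable \<V> \<and> X closure_of stk 1 (\<Union>\<V>) \<U> = topspace X"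
    using \<V>(1,2) by blast
qed

lemma maximal_disjoint_open_families_select_meeting:
  assumes "countable \<W>" and "\<forall>W\<in>\<W>. openin X W \<and> W \<noteq> {}"
    and maximal: "\<forall>n::nat. maximal_disjoint_open_family X (\<A> n)"
  obtains A where "\<forall>n. A n \<in> \<A> n" and "\<forall>W\<in>\<W>. W \<inter> (\<Union>n. A n) \<noteq> {}"
proof -
  define w where "w = from_nat_into \<W>"
  have "\<exists>A\<in>\<A> n. w n \<in> \<W> \<longrightarrow> A \<inter> w n \<noteq> {}" for n
  proof (rule ccontr)
    assume none: "\<not> ?thesis"
    have "{} \<in> \<A> n"
      using maximal by (intro maximal_disjoint_open_family_absorbs) auto
    then have "w n \<in> \<W>"
      using none by blast
    then have "w n \<in> \<A> n"
      using maximal none assms(2)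
      by (intro maximal_disjoint_open_family_absorbs) (auto simp: disjnt_def)
    then show False
      using none \<open>w n \<in> \<W>\<close> assms(2) by blast
  qed
  then obtain A where A: "\<forall>n. A n \<in> \<A> n" "\<forall>n. w n \<in> \<W> \<longrightarrow> A n \<inter> w n \<noteq> {}"
    by metis
  moreover have "W \<inter> (\<Union>n. A n) \<noteq> {}" if W: "W \<in> \<W>" for W
  proof -
    obtain n where "W = w n"
      using subset_range_from_nat_into[OF assms(1)] W unfolding w_def by blast
    then show ?thesis
      using A(2) W by blast
  qed
  ultimately show ?thesis
    using that by blast
qed

lemma DCCC_imp_selectively_3_star_ccc:
  assumes "DCCC X"
  shows "selectively_k_star_ccc 3 X"
  unfolding selectively_k_star_ccc_def
proof (intro allI impI, elim conjE)
  fix \<U> and \<A> :: "nat \<Rightarrow> 'a set set"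
  assume cover: "open_cover X \<U>" and maximal: "\<forall>n. maximal_disjoint_open_family X (\<A> n)"
  obtain \<W> where \<W>: "countable \<W>" "\<forall>W\<in>\<W>. openin X W \<and> W \<noteq> {} \<and> (\<exists>U\<in>\<U>. W \<subseteq> U)"
    and dense: "X closure_of stk 1 (\<Union>\<W>) \<U> = topspace X"
    using DCCC_dense_star_refinement[OF assms cover] by blast
  obtain A where A: "\<forall>n. A n \<in> \<A> n" "\<forall>W\<in>\<W>. W \<inter> (\<Union>n. A n) \<noteq> {}"
    using maximal_disjoint_open_families_select_meeting[OF \<W>(1) _ maximal] \<W>(2) by blast
  have "W \<subseteq> stk 1 (\<Union>n. A n) \<U>" if W: "W \<in> \<W>" for W
  proof -
    obtain U where U: "U \<in> \<U>" "W \<subseteq> U"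
      using \<W>(2) W by blast
    then have "U \<inter> (\<Union>n. A n) \<noteq> {}"
      using A(2) W by blast
    then show ?thesis
      using U by auto
  qed
  then have "\<Union>\<W> \<subseteq> stk 1 (\<Union>n. A n) \<U>"
    by blast
  then have "stk 1 (\<Union>\<W>) \<U> \<subseteq> stk 1 (stk 1 (\<Union>n. A n) \<U>) \<U>"
    by (rule stk_mono)
  also have "\<dots> = stk 2 (\<Union>n. A n) \<U>"
    by (simp add: numeral_2_eq_2)
  finally have "X closure_of stk 1 (\<Union>\<W>) \<U> \<subseteq> X closure_of stk 2 (\<Union>n. A n) \<U>"
    by (rule closure_of_mono)
  then have "X closure_of stk 2 (\<Union>n. A n) \<U> = topspace X"
    using closure_of_subset_topspace unfolding dense by (rule subset_antisym[rotated])
  then have "stk 3 (\<Union>n. A n) \<U> = topspace X"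
    using stk_Suc_eq_topspace_if_dense[OF cover, of 2] by (simp del: stk.simps)
  then show "\<exists>A. (\<forall>n. A n \<in> \<A> n) \<and> stk 3 (\<Union>n. A n) \<U> = topspace X"
    using A(1) by blast
qed

lemma uncountable_partition_nat:
  assumes "uncountable S"
  obtains d :: "'a \<Rightarrow> nat" where "\<forall>m. uncountable {a\<in>S. d a = m}"
proof -
  have "infinite S"
    using assms countable_finite by blast
  then have "|S \<times> (UNIV::nat set)| =o |S|"
    using card_of_Times_infinite[of S "UNIV::nat set"] infinite_iff_card_of_nat by blast
  then obtain h where h: "bij_betw h S (S \<times> (UNIV::nat set))"
    using card_of_ordIso ordIso_symmetric by blast
  have "uncountable {a\<in>S. snd (h a) = m}" for m
  proof
    assume "countable {a\<in>S. snd (h a) = m}"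
    then have "countable (fst ` h ` {a\<in>S. snd (h a) = m})"
      by simp
    moreover have "S \<subseteq> fst ` h ` {a\<in>S. snd (h a) = m}"
    proof
      fix s assume "s \<in> S"
      then have "(s, m) \<in> h ` S"
        using h unfolding bij_betw_def by simp
      then obtain a where "a \<in> S" "h a = (s, m)"
        by (metis imageE)
      then show "s \<in> fst ` h ` {a\<in>S. snd (h a) = m}"
        by force
    qed
    ultimately show False
      using assms countable_subset by blast
  qed
  then show ?thesis
    by (intro that allI)
qed

lemma subsingleton_finite:
  assumes "\<And>a b. a \<in> S \<Longrightarrow> b \<in> S \<Longrightarrow> a = b"
  shows "finite S"
proof (cases "S = {}")
  case False
  then obtain a where "a \<in> S"
    by blast
  then have "S \<subseteq> {a}"
    using assms by blast
  then show ?thesis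
    by (rule finite_subset) simp
qed simp

lemma regular_space_closure_nbhd:
  assumes "regular_space X" and "openin X W" and "x \<in> W"
  obtains U where "openin X U" "x \<in> U" "X closure_of U \<subseteq> W"
proof -
  have "neighbourhood_base_of (closedin X) X"
    using assms(1) by (simp add: neighbourhood_base_of_closedin)
  then obtain U C where "openin X U" "closedin X C" "x \<in> U" "U \<subseteq> C" "C \<subseteq> W"
    using assms(2,3) unfolding neighbourhood_base_of by meson
  moreover have "X closure_of U \<subseteq> C"
    using closure_of_minimal[OF \<open>U \<subseteq> C\<close> \<open>closedin X C\<close>] .
  ultimately show ?thesis
    using that by blast
qed

definition shrinking_sequence :: "'a topology \<Rightarrow> (nat \<Rightarrow> 'a set) \<Rightarrow> bool" where
  "shrinking_sequence X W \<longleftrightarrow> (\<forall>j. openin X (W j) \<and> X closure_of W (Suc j) \<subseteq> W j)"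

lemma shrinking_sequence_decseq:
  assumes "shrinking_sequence X W"
  shows "decseq W"
proof (rule decseq_SucI)
  fix j
  have "openin X (W (Suc j))" and closure: "X closure_of W (Suc j) \<subseteq> W j"
    using assms unfolding shrinking_sequence_def by simp_all
  then have "W (Suc j) \<subseteq> X closure_of W (Suc j)"
    by (simp add: closure_of_subset openin_subset)
  then show "W (Suc j) \<subseteq> W j"
    using closure by (rule order_trans)
qed

lemma regular_space_shrinking_sequence:
  assumes "regular_space X" and "openin X A" and "x \<in> A"
  obtains W where "shrinking_sequence X W" "W 0 = A" "\<And>j. x \<in> W j"
proof -
  let ?P = "\<lambda>n U. openin X U \<and> x \<in> U \<and> (n = 0 \<longrightarrow> U = A)"
  have step: "\<exists>V. ?P (Suc n) V \<and> X closure_of V \<subseteq> U" if U: "?P n U" for n U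
  proof -
    obtain V where "openin X V" "x \<in> V" "X closure_of V \<subseteq> U"
      using regular_space_closure_nbhd[OF assms(1), of U x] U by blast
    then show ?thesis
      by auto
  qed
  have "\<exists>W. \<forall>n. ?P n (W n) \<and> X closure_of W (Suc n) \<subseteq> W n"
    by (rule dependent_nat_choice) (use assms(2,3) step in auto)
  then obtain W where W: "\<forall>n. ?P n (W n) \<and> X closure_of W (Suc n) \<subseteq> W n"
    by blast
  show ?thesis
  proof (rule that)
    show "shrinking_sequence X W"
      using W unfolding shrinking_sequence_def by simp
    show "W 0 = A" "x \<in> W j" for j
      using W by simp_all
  qed
qed

lemma regular_space_shrinking_sequences:
  assumes regular: "regular_space X" and open_nonempty: "\<And>A. A \<in> \<A> \<Longrightarrow> openin X A \<and> A \<noteq> {}"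
  obtains W where "\<And>A. A \<in> \<A> \<Longrightarrow> shrinking_sequence X (W A) \<and> W A 0 = A \<and> (\<forall>j. W A j \<noteq> {})"
proof -
  have "\<exists>W. shrinking_sequence X W \<and> W 0 = A \<and> (\<forall>j. W j \<noteq> {})" if A: "A \<in> \<A>" for A
  proof -
    obtain x where "x \<in> A"
      using open_nonempty[OF A] by blast
    then obtain W where "shrinking_sequence X W" "W 0 = A" "\<And>j. x \<in> W j"
      using regular_space_shrinking_sequence[OF regular] open_nonempty[OF A] by blast
    then show ?thesis
      by blast
  qed
  then show ?thesis
    using that by metis
qed

definition shells :: "'a topology \<Rightarrow> (nat \<Rightarrow> 'a set) \<Rightarrow> nat \<Rightarrow> 'a set set" where
  "shells X W n = insert (W n) ((\<lambda>j. W j - X closure_of W (Suc (Suc j))) ` {..<n})"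

lemma shells_openin:
  assumes "shrinking_sequence X W" and "S \<in> shells X W n"
  shows "openin X S"
  using assms unfolding shells_def shrinking_sequence_def by (auto intro!: openin_diff)

lemma shells_subset:
  assumes "shrinking_sequence X W" and "S \<in> shells X W n"
  shows "S \<subseteq> W 0"
  using assms(2) decseqD[OF shrinking_sequence_decseq[OF assms(1)]] unfolding shells_def by blast

lemma shells_cover:
  assumes "shrinking_sequence X W"
  shows "W 0 \<subseteq> \<Union>(shells X W n)"
proof
  fix x assume x: "x \<in> W 0"
  show "x \<in> \<Union>(shells X W n)"
  proof (cases "x \<in> W n")
    case True
    then show ?thesis
      unfolding shells_def by blast
  next
    case False
    have "\<exists>j<n. x \<in> W j \<and> x \<notin> W (Suc j)"
      using x False by (induction n) (auto intro: less_SucI)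
    then obtain j where j: "j < n" "x \<in> W j" "x \<notin> W (Suc j)"
      by blast
    moreover have "X closure_of W (Suc (Suc j)) \<subseteq> W (Suc j)"
      using assms unfolding shrinking_sequence_def by blast
    ultimately have "x \<in> W j - X closure_of W (Suc (Suc j))"
      by blast
    then show ?thesis
      using j(1) unfolding shells_def by blast
  qed
qed

lemma shell_meets_imp_subset:
  assumes W: "shrinking_sequence X W" and S: "S \<in> shells X W n" and "m < n"
    and meets: "S \<inter> W (Suc (Suc m)) \<noteq> {}"
  shows "S \<subseteq> W (Suc m)"
proof -
  have anti: "W j \<subseteq> W i" if "i \<le> j" for i j
    using decseqD[OF shrinking_sequence_decseq[OF W] that] .
  consider "S = W n" | j where "j < n" "S = W j - X closure_of W (Suc (Suc j))"
    using S unfolding shells_def by auto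
  then show ?thesis
  proof cases
    case 1
    then show ?thesis
      using anti \<open>m < n\<close> by simp
  next
    case (2 j)
    show ?thesis
    proof (cases "j \<le> m")
      case True
      have "openin X (W (Suc (Suc j)))"
        using W unfolding shrinking_sequence_def by simp
      then have "W (Suc (Suc j)) \<subseteq> X closure_of W (Suc (Suc j))"
        by (simp add: closure_of_subset openin_subset)
      moreover have "W (Suc (Suc m)) \<subseteq> W (Suc (Suc j))"
        using anti True by simp
      ultimately have "S \<inter> W (Suc (Suc m)) = {}"
        using 2(2) by auto
      then show ?thesis
        using meets by contradiction
    next
      case False
      then have "W j \<subseteq> W (Suc m)"
        using anti by simp
      then show ?thesis
        using 2(2) by auto
    qed
  qed
qed

lemma stk_disjoint_from_layers:
  assumes "S \<inter> V 0 = {}" and "\<forall>m<n. \<forall>U\<in>\<U>. U \<inter> V (Suc m) \<noteq> {} \<longrightarrow> U \<subseteq> V m"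
  shows "stk n S \<U> \<inter> V n = {}"
  using assms(2)
proof (induction n)
  case 0
  then show ?case
    using assms(1) by simp
next
  case (Suc n)
  have IH: "stk n S \<U> \<inter> V n = {}"
    using Suc by simp
  show ?case
  proof (rule ccontr)
    assume "stk (Suc n) S \<U> \<inter> V (Suc n) \<noteq> {}"
    then obtain U where U: "U \<in> \<U>" "U \<inter> stk n S \<U> \<noteq> {}" "U \<inter> V (Suc n) \<noteq> {}"
      by auto
    then have "U \<subseteq> V n"
      using Suc.prems by blast
    then show False
      using U(2) IH by blast
  qed
qed

lemma discrete_family_subset:
  "discrete_family X \<A> \<Longrightarrow> \<B> \<subseteq> \<A> \<Longrightarrow> discrete_family X \<B>"
  unfolding discrete_family_def by (meson subsetD)

lemma discrete_family_pairwise_disjnt: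
  assumes discrete: "discrete_family X \<A>" and "\<Union>\<A> \<subseteq> topspace X"
  shows "pairwise disjnt \<A>"
proof (rule pairwiseI)
  fix A B assume AB: "A \<in> \<A>" "B \<in> \<A>" "A \<noteq> B"
  show "disjnt A B"
  proof (rule ccontr)
    assume "\<not> disjnt A B"
    then obtain x where x: "x \<in> A" "x \<in> B"
      unfolding disjnt_def by blast
    then have x_top: "x \<in> topspace X"
      using AB(1) assms(2) by blast
    obtain W where "openin X W" "x \<in> W"
      and "\<forall>A1\<in>\<A>. \<forall>A2\<in>\<A>. A1 \<inter> W \<noteq> {} \<longrightarrow> A2 \<inter> W \<noteq> {} \<longrightarrow> A1 = A2"
      using bspec[OF discrete[unfolded discrete_family_def] x_top] by (elim exE conjE)
    then show False
      using AB x by blast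
  qed
qed

lemma discrete_family_image:
  assumes discrete: "discrete_family X \<A>" and shrink: "\<And>A. A \<in> \<A> \<Longrightarrow> f A \<subseteq> A"
  shows "discrete_family X (f ` \<A>)"
  unfolding discrete_family_def
proof
  fix x assume x_top: "x \<in> topspace X"
  obtain W where W: "openin X W" "x \<in> W"
    and unique: "\<forall>A1\<in>\<A>. \<forall>A2\<in>\<A>. A1 \<inter> W \<noteq> {} \<longrightarrow> A2 \<inter> W \<noteq> {} \<longrightarrow> A1 = A2"
    using bspec[OF discrete[unfolded discrete_family_def] x_top] by (elim exE conjE)
  have "B1 = B2"
    if B: "B1 \<in> f ` \<A>" "B2 \<in> f ` \<A>" "B1 \<inter> W \<noteq> {}" "B2 \<inter> W \<noteq> {}" for B1 B2
  proof -
    obtain A1 A2 where A: "A1 \<in> \<A>" "A2 \<in> \<A>" "B1 = f A1" "B2 = f A2"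
      using B(1,2) by (metis imageE)
    moreover have "A1 \<inter> W \<noteq> {}" "A2 \<inter> W \<noteq> {}"
      using B(3,4) shrink[OF A(1)] shrink[OF A(2)] A(3,4) by blast+
    ultimately show "B1 = B2"
      using unique by metis
  qed
  then show "\<exists>W. openin X W \<and> x \<in> W \<and>
      (\<forall>B1\<in>f ` \<A>. \<forall>B2\<in>f ` \<A>. B1 \<inter> W \<noteq> {} \<longrightarrow> B2 \<inter> W \<noteq> {} \<longrightarrow> B1 = B2)"
    using W by blast
qed

lemma discrete_family_imp_locally_finite:
  assumes discrete: "discrete_family X \<A>" and "\<Union>\<A> \<subseteq> topspace X"
  shows "locally_finite_in X \<A>"
  unfolding locally_finite_in_def
proof (intro conjI ballI)
  fix x assume x_top: "x \<in> topspace X"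
  obtain W where W: "openin X W" "x \<in> W"
    and unique: "\<forall>A1\<in>\<A>. \<forall>A2\<in>\<A>. A1 \<inter> W \<noteq> {} \<longrightarrow> A2 \<inter> W \<noteq> {} \<longrightarrow> A1 = A2"
    using bspec[OF discrete[unfolded discrete_family_def] x_top] by (elim exE conjE)
  have "finite {A \<in> \<A>. A \<inter> W \<noteq> {}}"
    by (rule subsingleton_finite) (use unique in blast)
  then show "\<exists>V. openin X V \<and> x \<in> V \<and> finite {A \<in> \<A>. A \<inter> V \<noteq> {}}"
    using W by blast
qed (rule assms(2))

lemma countable_members_meeting_Union:
  assumes "countable \<V>"
    and unique: "\<And>V A B. V \<in> \<V> \<Longrightarrow> A \<in> \<A> \<Longrightarrow> B \<in> \<A> \<Longrightarrow> V \<inter> f A \<noteq> {} \<Longrightarrow> V \<inter> f B \<noteq> {} \<Longrightarrow> A = B"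
  shows "countable {A \<in> \<A>. \<Union>\<V> \<inter> f A \<noteq> {}}"
proof -
  have "{A \<in> \<A>. \<Union>\<V> \<inter> f A \<noteq> {}} = (\<Union>V\<in>\<V>. {A \<in> \<A>. V \<inter> f A \<noteq> {}})"
    by blast
  moreover have "finite {A \<in> \<A>. V \<inter> f A \<noteq> {}}" if "V \<in> \<V>" for V
    by (rule subsingleton_finite) (use unique \<open>V \<in> \<V>\<close> in blast)
  ultimately show ?thesis
    using assms(1) by (simp add: countable_finite)
qed

lemma closedin_Union_closures_discrete_family:
  assumes discrete: "discrete_family X \<A>" and inside: "\<And>A. A \<in> \<A> \<Longrightarrow> X closure_of f A \<subseteq> A"
  shows "closedin X (\<Union>A\<in>\<A>. X closure_of f A)"
proof -
  have "discrete_family X ((\<lambda>A. X closure_of f A) ` \<A>)"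
    using discrete inside by (rule discrete_family_image)
  moreover have "(\<Union>A\<in>\<A>. X closure_of f A) \<subseteq> topspace X"
    by (intro UN_least closure_of_subset_topspace)
  ultimately have "locally_finite_in X ((\<lambda>A. X closure_of f A) ` \<A>)"
    by (rule discrete_family_imp_locally_finite)
  then show ?thesis
    by (rule closedin_locally_finite_Union[rotated]) auto
qed

definition layered_cover ::
    "'a topology \<Rightarrow> 'a set set \<Rightarrow> ('a set \<Rightarrow> nat \<Rightarrow> 'a set) \<Rightarrow> ('a set \<Rightarrow> nat) \<Rightarrow> 'a set set" where
  "layered_cover X \<A> W d =
     insert (topspace X - (\<Union>A\<in>\<A>. X closure_of W A 1)) (\<Union>A\<in>\<A>. shells X (W A) (d A))"

lemma layered_cover_open_cover:
  assumes discrete: "discrete_family X \<A>"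
    and W: "\<And>A. A \<in> \<A> \<Longrightarrow> shrinking_sequence X (W A) \<and> W A 0 = A"
  shows "open_cover X (layered_cover X \<A> W d)"
  unfolding open_cover_def
proof
  define F where "F = (\<Union>A\<in>\<A>. X closure_of W A 1)"
  have closure_W1: "X closure_of W A 1 \<subseteq> A" if "A \<in> \<A>" for A
    using W[OF that] unfolding shrinking_sequence_def by (metis One_nat_def)
  have "closedin X F"
    unfolding F_def using discrete closure_W1 by (rule closedin_Union_closures_discrete_family)
  then have "openin X (topspace X - F)"
    by (intro openin_diff openin_topspace)
  moreover have "openin X S" if "A \<in> \<A>" "S \<in> shells X (W A) (d A)" for A S
    using shells_openin W that by blast
  ultimately show open_cover: "\<forall>U\<in>layered_cover X \<A> W d. openin X U"
    unfolding layered_cover_def F_def by blast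
  show "\<Union>(layered_cover X \<A> W d) = topspace X"
  proof (rule subset_antisym)
    show "\<Union>(layered_cover X \<A> W d) \<subseteq> topspace X"
      using open_cover openin_subset by blast
    show "topspace X \<subseteq> \<Union>(layered_cover X \<A> W d)"
    proof
      fix x assume x: "x \<in> topspace X"
      show "x \<in> \<Union>(layered_cover X \<A> W d)"
      proof (cases "x \<in> F")
        case True
        then obtain A where A: "A \<in> \<A>" "x \<in> X closure_of W A 1"
          unfolding F_def by blast
        then have "x \<in> W A 0"
          using closure_W1 W by blast
        then have "x \<in> \<Union>(shells X (W A) (d A))"
          using shells_cover W[OF A(1)] by blast
        then show ?thesis
          using A(1) unfolding layered_cover_def by blast
      next
        case False
        then show ?thesis
          using x unfolding layered_cover_def F_def by blast
      qed
    qed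
  qed
qed

lemma layered_cover_meets_imp_shell:
  assumes discrete: "discrete_family X \<A>"
    and W: "\<And>A. A \<in> \<A> \<Longrightarrow> shrinking_sequence X (W A) \<and> W A 0 = A"
    and U: "U \<in> layered_cover X \<A> W d" and A: "A \<in> \<A>" and meets: "U \<inter> W A 1 \<noteq> {}"
  shows "U \<in> shells X (W A) (d A)"
proof -
  have "openin X (W A 1)"
    using W[OF A] unfolding shrinking_sequence_def by blast
  then have "W A 1 \<subseteq> X closure_of W A 1"
    by (simp add: closure_of_subset openin_subset)
  then obtain C where C: "C \<in> \<A>" "U \<in> shells X (W C) (d C)"
    using U A meets unfolding layered_cover_def by blast
  have "U \<subseteq> C"
    using shells_subset[OF _ C(2)] W[OF C(1)] by blast
  moreover have "W A 1 \<subseteq> A"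
    using decseqD[OF shrinking_sequence_decseq, of X "W A" 0 1] W[OF A] by simp
  ultimately have "\<not> disjnt C A"
    using meets unfolding disjnt_def by blast
  moreover have "\<Union>\<A> \<subseteq> topspace X"
    using W unfolding shrinking_sequence_def by (metis Sup_least openin_subset)
  ultimately have "C = A"
    using pairwiseD[OF discrete_family_pairwise_disjnt[OF discrete] C(1) A] by blast
  then show ?thesis
    using C(2) by simp
qed

lemma regular_space_discrete_family_layered_cover:
  fixes d :: "'a set \<Rightarrow> nat"
  assumes regular: "regular_space X" and discrete: "discrete_family X \<A>"
    and open_nonempty: "\<And>A. A \<in> \<A> \<Longrightarrow> openin X A \<and> A \<noteq> {}"
  obtains \<U> V where "open_cover X \<U>"
    and "\<And>A m. A \<in> \<A> \<Longrightarrow> openin X (V A m) \<and> V A m \<noteq> {}"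
    and "\<And>U A B. U \<in> \<U> \<Longrightarrow> A \<in> \<A> \<Longrightarrow> B \<in> \<A> \<Longrightarrow> U \<inter> V A 0 \<noteq> {} \<Longrightarrow> U \<inter> V B 0 \<noteq> {} \<Longrightarrow> A = B"
    and "\<And>A. A \<in> \<A> \<Longrightarrow> \<forall>m<d A. \<forall>U\<in>\<U>. U \<inter> V A (Suc m) \<noteq> {} \<longrightarrow> U \<subseteq> V A m"
proof -
  obtain W where W: "\<And>A. A \<in> \<A> \<Longrightarrow> shrinking_sequence X (W A) \<and> W A 0 = A \<and> (\<forall>j. W A j \<noteq> {})"
    using regular_space_shrinking_sequences[OF regular open_nonempty] by blast
  have W': "shrinking_sequence X (W A) \<and> W A 0 = A" if "A \<in> \<A>" for A
    using W[OF that] by blast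
  note shell = layered_cover_meets_imp_shell[OF discrete W', of _ d]
  show ?thesis
  proof (rule that[of "layered_cover X \<A> W d" "\<lambda>A m. W A (Suc m)"])
    show "open_cover X (layered_cover X \<A> W d)"
      using discrete W' by (rule layered_cover_open_cover)
    show "openin X (W A (Suc m)) \<and> W A (Suc m) \<noteq> {}" if "A \<in> \<A>" for A m
      using W[OF that] unfolding shrinking_sequence_def by blast
    show "A = B" if "U \<in> layered_cover X \<A> W d" "A \<in> \<A>" "B \<in> \<A>"
      "U \<inter> W A (Suc 0) \<noteq> {}" "U \<inter> W B (Suc 0) \<noteq> {}" for U A B
    proof -
      have "U \<in> shells X (W A) (d A)" "U \<in> shells X (W B) (d B)"
        using shell that by (simp_all add: One_nat_def)
      then have "U \<subseteq> A \<inter> B"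
        using shells_subset W' that(2,3) by blast
      moreover have "pairwise disjnt \<A>"
        using discrete_family_pairwise_disjnt[OF discrete] open_nonempty openin_subset by blast
      ultimately show "A = B"
        using that(2-4) unfolding pairwise_def disjnt_def by blast
    qed
    show "\<forall>m<d A. \<forall>U\<in>layered_cover X \<A> W d. U \<inter> W A (Suc (Suc m)) \<noteq> {} \<longrightarrow> U \<subseteq> W A (Suc m)"
      if A: "A \<in> \<A>" for A
    proof (intro allI impI ballI)
      fix m U assume "m < d A" "U \<in> layered_cover X \<A> W d" and meets: "U \<inter> W A (Suc (Suc m)) \<noteq> {}"
      have "U \<inter> W A 1 \<noteq> {}"
        using meets decseqD[OF shrinking_sequence_decseq, of X "W A" 1 "Suc (Suc m)"] W[OF A]
        by auto
      then have "U \<in> shells X (W A) (d A)"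
        using shell \<open>U \<in> layered_cover X \<A> W d\<close> A by blast
      then show "U \<subseteq> W A (Suc m)"
        using shell_meets_imp_subset W[OF A] \<open>m < d A\<close> meets by blast
    qed
  qed
qed

lemma weakly_omega_star_lindelof_imp_DCCC:
  assumes regular: "regular_space X" and weakly: "weakly_omega_star_lindelof X"
  shows "DCCC X"
  unfolding DCCC_def
proof (intro allI impI, elim conjE)
  fix \<A> assume open_\<A>: "\<forall>A\<in>\<A>. openin X A" and discrete: "discrete_family X \<A>"
  show "countable \<A>"
  proof (rule ccontr)
    assume "uncountable \<A>"
    define \<A>' where "\<A>' = \<A> - {{}}"
    have "uncountable \<A>'"
      using \<open>uncountable \<A>\<close> unfolding \<A>'_def by simp
    then obtain d :: "'a set \<Rightarrow> nat" where d: "\<forall>m. uncountable {A \<in> \<A>'. d A = m}"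
      by (rule uncountable_partition_nat)
    have "discrete_family X \<A>'"
      using discrete by (rule discrete_family_subset) (simp add: \<A>'_def)
    moreover have "openin X A \<and> A \<noteq> {}" if "A \<in> \<A>'" for A
      using open_\<A> that unfolding \<A>'_def by blast
    ultimately obtain \<U> V where cover: "open_cover X \<U>"
      and V_open: "\<And>A m. A \<in> \<A>' \<Longrightarrow> openin X (V A m) \<and> V A m \<noteq> {}"
      and unique: "\<And>U A B. U \<in> \<U> \<Longrightarrow> A \<in> \<A>' \<Longrightarrow> B \<in> \<A>' \<Longrightarrow> U \<inter> V A 0 \<noteq> {} \<Longrightarrow> U \<inter> V B 0 \<noteq> {} \<Longrightarrow> A = B"
      and layers: "\<And>A. A \<in> \<A>' \<Longrightarrow> \<forall>m<d A. \<forall>U\<in>\<U>. U \<inter> V A (Suc m) \<noteq> {} \<longrightarrow> U \<subseteq> V A m"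
      by (rule regular_space_discrete_family_layered_cover[OF regular, where d = d]) blast+
    obtain k \<V> where \<V>: "\<V> \<subseteq> \<U>" "countable \<V>"
      and dense: "X closure_of stk k (\<Union>\<V>) \<U> = topspace X"
      using weakly cover unfolding weakly_omega_star_lindelof_def by blast
    have "countable {A \<in> \<A>'. \<Union>\<V> \<inter> V A 0 \<noteq> {}}"
      by (rule countable_members_meeting_Union[OF \<V>(2)]) (use unique \<V>(1) in blast)
    then have "\<not> {A \<in> \<A>'. d A = k} \<subseteq> {A \<in> \<A>'. \<Union>\<V> \<inter> V A 0 \<noteq> {}}"
      using spec[OF d, of k] countable_subset by blast
    then obtain \<alpha> where \<alpha>: "\<alpha> \<in> \<A>'" "d \<alpha> = k" "\<Union>\<V> \<inter> V \<alpha> 0 = {}"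
      by blast
    have "stk k (\<Union>\<V>) \<U> \<inter> V \<alpha> k = {}"
      using \<alpha>(3) layers[OF \<alpha>(1)] unfolding \<alpha>(2) by (rule stk_disjoint_from_layers)
    then have "V \<alpha> k \<inter> X closure_of stk k (\<Union>\<V>) \<U> = {}"
      using openin_Int_closure_of_eq_empty V_open[OF \<alpha>(1)] by blast
    then show False
      using dense V_open[OF \<alpha>(1), of k] openin_subset by blast
  qed
qed

theorem corollary7:
  fixes X :: "'a topology"
  assumes "regular_space X"
  shows "(DCCC X \<longleftrightarrow> selectively_k_star_ccc 3 X)
       \<and> (DCCC X \<longleftrightarrow> selectively_omega_star_ccc X)
       \<and> (DCCC X \<longleftrightarrow> weakly_k_star_lindelof 1 X)
       \<and> (DCCC X \<longleftrightarrow> weakly_omega_star_lindelof X)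
       \<and> (DCCC X \<longleftrightarrow> weakly_strongly_k_star_lindelof 2 X)
       \<and> (DCCC X \<longleftrightarrow> weakly_strongly_omega_star_lindelof X)
       \<and> (DCCC X \<longleftrightarrow> k_star_lindelof 2 X)
       \<and> (DCCC X \<longleftrightarrow> omega_star_lindelof X)
       \<and> (DCCC X \<longleftrightarrow> strongly_k_star_lindelof 3 X)
       \<and> (DCCC X \<longleftrightarrow> strongly_omega_star_lindelof X)"
proof -
  have two: "Suc 1 = 2" and three: "Suc 2 = 3"
    by simp_all
  note implications =
    DCCC_imp_weakly_star_lindelof[of X] DCCC_imp_selectively_3_star_ccc[of X]
    weakly_k_star_lindelof_imp_Suc[of 1 X, unfolded two]
    weakly_k_star_lindelof_imp_weakly_strongly_Suc[of 1 X, unfolded two]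
    k_star_lindelof_imp_strongly_Suc[of 2 X, unfolded three]
    selectively_k_star_ccc_imp_omega[of 3 X, simplified]
    weakly_k_star_lindelof_imp_omega[of 1 X, simplified]
    weakly_strongly_k_star_lindelof_imp_omega[of 2 X, simplified]
    k_star_lindelof_imp_omega[of 2 X, simplified]
    strongly_k_star_lindelof_imp_omega[of 3 X, simplified]
    selectively_omega_star_ccc_imp_omega_star_lindelof[of X]
    strongly_omega_star_lindelof_imp_omega[of X]
    omega_star_lindelof_imp_weakly_omega[of X]
    weakly_strongly_omega_star_lindelof_imp_weakly_omega[of X]
    weakly_omega_star_lindelof_imp_DCCC[OF assms]
  show ?thesis
    using implications by blast
qed

end
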